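(* Let $G$ be an abelian, second countable, locally compact group with Haar measure $\mu$ and $(\Lambda_n)$ a F\o lner sequence in $G$. Let $\mathfrak{H}$ be a Hilbert space and $f:G\to\mathfrak{H}$ bounded with $g\mapsto\langle f(g),x\rangle$ Borel measurable for every $x\in\mathfrak{H}$, and assume $(g,h)\mapsto\langle f(g),f(h)\rangle$ is Borel measurable on $G\times G$. Then $\int_\Lambda\langle f(g),f(gh)\rangle\,dg$ exists for all measurable $\Lambda\subset G$ with $\mu(\Lambda)<\infty$ and all $h\in G$. Assume that \[ \gamma_h:=\lim_{n\to\infty}\frac{1}{\mu(\Lambda_n)}\int_{\Lambda_n}\langle f(g),f(gh)\rangle\,dg \] exists for all $h\in G$. Then for all $n$, \[ \lim_{m\to\infty}\frac{1}{\mu(\Lambda_m)}\int_{\Lambda_n}\int_{\Lambda_n}\int_{\Lambda_m}\langle f(gh_1),f(gh_2)\rangle\,dg\,dh_1\,dh_2=\int_{\Lambda_n}\int_{\Lambda_n}\gamma_{h_1^{-1}h_2}\,dh_1\,dh_2, \] and in particular these integrals exist.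
   Context: A F\o lner sequence in $G$ is a sequence $(\Lambda_n)$ of compact subsets with $\mu(\Lambda_n)>0$ and $\lim_n\mu(\Lambda_n\,\Delta\,(\Lambda_n g))/\mu(\Lambda_n)=0$ for all $g\in G$. Inner products are conjugate linear in the first slot; iterated integrals are evaluated from the innermost outward. *)

theory Defs
  imports "HOL-Analysis.Analysis"
begin

text \<open>Complex inner product spaces (inner product conjugate linear in the FIRST slot).
  A complex Hilbert space is a type of class complex_inner that is also complete_space.\<close>

class complex_inner = real_normed_vector +
  fixes scaleC :: "complex \<Rightarrow> 'a \<Rightarrow> 'a"
  fixes cinner :: "'a \<Rightarrow> 'a \<Rightarrow> complex"
  assumes scaleC_add_right: "scaleC a (x + y) = scaleC a x + scaleC a y"
  and scaleC_add_left: "scaleC (a + b) x = scaleC a x + scaleC b x"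
  and scaleC_scaleC: "scaleC a (scaleC b x) = scaleC (a * b) x"
  and scaleC_one: "scaleC 1 x = x"
  and scaleR_scaleC: "scaleR r x = scaleC (complex_of_real r) x"
  and cinner_commute: "cinner x y = cnj (cinner y x)"
  and cinner_add_left: "cinner (x + y) z = cinner x z + cinner y z"
  and cinner_scaleC_left: "cinner (scaleC a x) y = cnj a * cinner x y"
  and cinner_self_real: "Im (cinner x x) = 0"
  and cinner_ge_zero: "0 \<le> Re (cinner x x)"
  and cinner_eq_zero_iff: "cinner x x = 0 \<longleftrightarrow> x = 0"
  and norm_eq_sqrt_cinner: "norm x = sqrt (Re (cinner x x))"

text \<open>Haar measure on a (Hausdorff) locally compact abelian group, group law written additively:
  a nonzero translation invariant Radon measure on the Borel sets.\<close>

definition haar_measure :: "'g::topological_ab_group_add measure \<Rightarrow> bool" where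
  "haar_measure \<mu> \<longleftrightarrow>
     sets \<mu> = sets borel \<and>
     (\<forall>g. \<forall>A\<in>sets borel. emeasure \<mu> ((\<lambda>x. g + x) ` A) = emeasure \<mu> A) \<and>
     (\<forall>K. compact K \<longrightarrow> emeasure \<mu> K < \<infinity>) \<and>
     (\<forall>U. open U \<and> U \<noteq> {} \<longrightarrow> emeasure \<mu> U > 0) \<and>
     (\<forall>A\<in>sets borel. emeasure \<mu> A = (INF U\<in>{U. open U \<and> A \<subseteq> U}. emeasure \<mu> U)) \<and>
     (\<forall>U. open U \<longrightarrow> emeasure \<mu> U = (SUP K\<in>{K. compact K \<and> K \<subseteq> U}. emeasure \<mu> K))"

definition folner_seq :: "'g::topological_ab_group_add measure \<Rightarrow> (nat \<Rightarrow> 'g set) \<Rightarrow> bool" where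
  "folner_seq \<mu> \<Lambda> \<longleftrightarrow>
     (\<forall>n. compact (\<Lambda> n) \<and> emeasure \<mu> (\<Lambda> n) > 0) \<and>
     (\<forall>g. (\<lambda>n. measure \<mu> ((\<Lambda> n - (\<lambda>x. x + g) ` \<Lambda> n) \<union> ((\<lambda>x. x + g) ` \<Lambda> n - \<Lambda> n))
              / measure \<mu> (\<Lambda> n)) \<longlonglongrightarrow> 0)"

end

theory Submission
  imports Defs
begin

text \<open>By translation invariance of Haar measure, the inner integral of
  \<open>\<langle>f(g + h\<^sub>1), f(g + h\<^sub>2)\<rangle>\<close> over \<open>\<Lambda>\<^sub>m\<close> is the integral of
  \<open>\<langle>f g, f(g + h\<^sub>2 - h\<^sub>1)\<rangle>\<close> over the translate \<open>\<Lambda>\<^sub>m + h\<^sub>1\<close>. Replacing the translate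
  by \<open>\<Lambda>\<^sub>m\<close> costs at most \<open>\<parallel>f\<parallel>\<^sub>\<infinity>\<^sup>2 \<mu>(\<Lambda>\<^sub>m \<triangle> (\<Lambda>\<^sub>m + h\<^sub>1))\<close>, which is
  \<open>o(\<mu>(\<Lambda>\<^sub>m))\<close> by the F{\o}lner property, so the normalised inner integral tends to
  \<open>\<gamma>(h\<^sub>2 - h\<^sub>1)\<close> pointwise. All averages are bounded by \<open>\<parallel>f\<parallel>\<^sub>\<infinity>\<^sup>2\<close> (Cauchy--Schwarz),
  so dominated convergence on the finite-measure set \<open>\<Lambda>\<^sub>n\<close> moves the limit through the two
  outer integrals. Haar measure on a second countable locally compact group is \<open>\<sigma>\<close>-finite,
  which makes all parametric integrals measurable.\<close>

lemma cinner_zero_left [simp]: "cinner (0::'a::complex_inner) y = 0"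
  using cinner_add_left[of "0::'a" 0 y] by simp

lemma cinner_zero_right [simp]: "cinner (x::'a::complex_inner) 0 = 0"
  using cinner_commute[of x 0] by simp

lemma cinner_add_right: "cinner (x::'a::complex_inner) (y + z) = cinner x y + cinner x z"
  by (metis cinner_add_left cinner_commute complex_cnj_add)

lemma cinner_scaleC_right: "cinner (x::'a::complex_inner) (scaleC a y) = a * cinner x y"
  by (metis cinner_commute cinner_scaleC_left complex_cnj_cnj complex_cnj_mult)

lemma cinner_self_eq_norm_square: "cinner (x::'a::complex_inner) x = complex_of_real ((norm x)\<^sup>2)"
  using cinner_self_real[of x] cinner_ge_zero[of x] norm_eq_sqrt_cinner[of x]
  by (simp add: complex_eq_iff)

lemma norm_cinner_le: "norm (cinner (x::'a::complex_inner) y) \<le> norm x * norm y"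
proof (cases "y = 0")
  case True
  then show ?thesis by simp
next
  case False
  define t where "t = cinner y x / cinner y y"
  define w where "w = x + scaleC (-t) y"
  have yy: "cinner y y = complex_of_real ((norm y)\<^sup>2)" by (rule cinner_self_eq_norm_square)
  have "cinner y y \<noteq> 0" using False cinner_eq_zero_iff by blast
  then have yw: "cinner y w = 0"
    by (simp add: w_def t_def cinner_add_right cinner_scaleC_right)
  have "cinner w w = cinner x w"
    using yw by (simp add: w_def cinner_add_left cinner_scaleC_left)
  also have "\<dots> = cinner x x - t * cinner x y"
    by (simp add: w_def cinner_add_right cinner_scaleC_right)
  also have "t * cinner x y = complex_of_real ((cmod (cinner x y))\<^sup>2 / (norm y)\<^sup>2)"
    using complex_norm_square[of "cinner x y"] yy
    by (simp add: t_def cinner_commute[of y x] mult.commute)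
  finally have "Re (cinner w w) = (norm x)\<^sup>2 - (cmod (cinner x y))\<^sup>2 / (norm y)\<^sup>2"
    using cinner_self_eq_norm_square[of x] by simp
  with cinner_ge_zero[of w] False have "(cmod (cinner x y))\<^sup>2 \<le> (norm x * norm y)\<^sup>2"
    by (simp add: divide_le_eq power_mult_distrib)
  then show ?thesis by (rule power2_le_imp_le) simp
qed

lemma set_integrable_bounded:
  fixes F :: "'a \<Rightarrow> 'b::{banach, second_countable_topology}"
  assumes "F \<in> borel_measurable M" "A \<in> sets M" "emeasure M A < \<infinity>"
    and "\<And>x. x \<in> A \<Longrightarrow> norm (F x) \<le> C"
  shows "set_integrable M A F"
proof (rule set_integrable_bound)
  show "set_integrable M A (\<lambda>_. C)"
    using assms(2,3) unfolding set_integrable_def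
    by (intro integrable_scaleR_left integrable_real_indicator) auto
  show "set_borel_measurable M A F"
    using assms(1,2) unfolding set_borel_measurable_def by measurable
  show "AE x in M. x \<in> A \<longrightarrow> norm (F x) \<le> norm C"
    using assms(4) by (auto intro: order_trans[OF _ abs_ge_self])
qed

lemma norm_set_integral_le:
  fixes F :: "'a \<Rightarrow> 'b::{banach, second_countable_topology}"
  assumes "F \<in> borel_measurable M" "A \<in> sets M" "emeasure M A < \<infinity>"
    and "\<And>x. x \<in> A \<Longrightarrow> norm (F x) \<le> C"
  shows "norm (LINT x:A|M. F x) \<le> C * measure M A"
proof -
  have "norm (LINT x:A|M. F x) \<le> (LINT x:A|M. norm (F x))"
    by (intro set_integral_norm_bound set_integrable_bounded[OF assms])
  also have "\<dots> \<le> (LINT x:A|M. C)"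
    using assms by (intro set_integral_mono set_integrable_bounded[where C=C])
      (auto intro: order_trans[OF norm_ge_zero])
  also have "\<dots> = C * measure M A"
    using assms(2,3) by (simp add: set_integral_const)
  finally show ?thesis .
qed

lemma norm_set_integral_diff_le:
  fixes F :: "'a \<Rightarrow> 'b::{banach, second_countable_topology}"
  assumes F: "F \<in> borel_measurable M"
    and S: "S \<in> sets M" "emeasure M S < \<infinity>" and T: "T \<in> sets M" "emeasure M T < \<infinity>"
    and bound: "\<And>x. norm (F x) \<le> C"
  shows "norm ((LINT x:S|M. F x) - (LINT x:T|M. F x)) \<le> C * measure M ((T - S) \<union> (S - T))"
proof -
  define D where "D = (T - S) \<union> (S - T)"
  have D: "D \<in> sets M" using S T by (auto simp: D_def)
  have "emeasure M D \<le> emeasure M (S \<union> T)"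
    using S T D by (intro emeasure_mono) (auto simp: D_def)
  also have "\<dots> < \<infinity>"
    using S T by (intro le_less_trans[OF emeasure_subadditive]) auto
  finally have D_finite: "emeasure M D < \<infinity>" .
  have "(LINT x:S|M. F x) - (LINT x:T|M. F x) = (\<integral>x. (indicator S x - indicator T x) *\<^sub>R F x \<partial>M)"
    using set_integrable_bounded[OF F S bound] set_integrable_bounded[OF F T bound]
    unfolding set_lebesgue_integral_def set_integrable_def
    by (simp add: scaleR_left_diff_distrib)
  also have "\<dots> = (LINT x:D|M. (indicator S x - indicator T x) *\<^sub>R F x)"
    unfolding set_lebesgue_integral_def D_def
    by (rule Bochner_Integration.integral_cong) (auto split: split_indicator)
  also have "norm \<dots> \<le> C * measure M D"
    using F S T bound by (intro norm_set_integral_le D D_finite) (auto simp: D_def split: split_indicator)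
  finally show ?thesis unfolding D_def .
qed

lemma borel_measurable_uminus_group [measurable (raw)]:
  fixes g :: "'a \<Rightarrow> 'b::{second_countable_topology, topological_group_add}"
  assumes "g \<in> borel_measurable M"
  shows "(\<lambda>x. - g x) \<in> borel_measurable M"
  by (rule borel_measurable_continuous_on[OF _ assms]) (intro continuous_intros)

lemma haar_measure_sets: "haar_measure \<mu> \<Longrightarrow> sets \<mu> = sets borel"
  by (simp add: haar_measure_def)

lemma haar_measure_translate:
  assumes "haar_measure \<mu>" "A \<in> sets borel"
  shows "emeasure \<mu> ((\<lambda>x. g + x) ` A) = emeasure \<mu> A"
  using haar_measure_def[THEN iffD1, OF assms(1), THEN conjunct2, THEN conjunct1] assms(2)
  by blast

lemma haar_measure_compact_finite:
  assumes "haar_measure \<mu>" "compact K"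
  shows "emeasure \<mu> K < \<infinity>"
  using haar_measure_def[THEN iffD1, OF assms(1), THEN conjunct2, THEN conjunct2, THEN conjunct1]
    assms(2)
  by blast

lemma haar_measure_distr_translate:
  fixes \<mu> :: "'g::{topological_ab_group_add, second_countable_topology} measure"
  assumes haar: "haar_measure \<mu>"
  shows "distr \<mu> \<mu> (\<lambda>x. x + h) = \<mu>"
proof (rule measure_eqI)
  have sets[measurable_cong]: "sets \<mu> = sets borel" using haar_measure_sets[OF haar] .
  have translate: "(\<lambda>x. x + h) \<in> measurable \<mu> \<mu>" by measurable
  show "sets (distr \<mu> \<mu> (\<lambda>x. x + h)) = sets \<mu>" by simp
  fix A assume "A \<in> sets (distr \<mu> \<mu> (\<lambda>x. x + h))"
  then have A: "A \<in> sets borel" using sets by simp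
  have "(\<lambda>x. x + h) -` A = (\<lambda>x. - h + x) ` A"
    by (auto simp: image_iff algebra_simps intro!: bexI[where x="_ + h"])
  moreover note haar_measure_translate[OF haar A, of "- h"]
  moreover have "space \<mu> = UNIV" using sets_eq_imp_space_eq[OF sets] by simp
  ultimately show "emeasure (distr \<mu> \<mu> (\<lambda>x. x + h)) A = emeasure \<mu> A"
    using A by (simp add: emeasure_distr[OF translate])
qed

lemma haar_set_integral_translate:
  fixes \<mu> :: "'g::{topological_ab_group_add, second_countable_topology} measure"
    and F :: "'g \<Rightarrow> 'b::{banach, second_countable_topology}"
  assumes haar: "haar_measure \<mu>" and F: "F \<in> borel_measurable borel" and L: "L \<in> sets borel"
  shows "(LINT g:L|\<mu>. F (g + h)) = (LINT y:(\<lambda>x. x + h) ` L|\<mu>. F y)"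
proof -
  have sets[measurable_cong]: "sets \<mu> = sets borel" using haar_measure_sets[OF haar] .
  define G where "G y = indicator L (y + - h) *\<^sub>R F y" for y
  have "F \<in> borel_measurable \<mu>" using F by (simp add: measurable_cong_sets[OF sets refl])
  then have G: "G \<in> borel_measurable \<mu>" unfolding G_def using L by measurable
  have "(LINT g:L|\<mu>. F (g + h)) = (\<integral>g. G (g + h) \<partial>\<mu>)"
    by (simp add: set_lebesgue_integral_def G_def)
  also have "\<dots> = (\<integral>y. G y \<partial>distr \<mu> \<mu> (\<lambda>x. x + h))"
    by (rule integral_distr[symmetric]) (use G in measurable)
  also have "\<dots> = (LINT y:(\<lambda>x. x + h) ` L|\<mu>. F y)"
  proof -
    have "y + - h \<in> L \<longleftrightarrow> y \<in> (\<lambda>x. x + h) ` L" for y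
      by (auto simp: image_iff algebra_simps intro!: bexI[where x="y - h"])
    then show ?thesis
      unfolding haar_measure_distr_translate[OF haar] set_lebesgue_integral_def G_def
      by (simp add: indicator_def)
  qed
  finally show ?thesis .
qed

lemma haar_measure_sigma_finite:
  fixes \<mu> :: "'g::{topological_ab_group_add, t2_space, second_countable_topology} measure"
  assumes lc: "locally_compact_space (euclidean :: 'g topology)" and haar: "haar_measure \<mu>"
  shows "sigma_finite_measure \<mu>"
proof
  have sets: "sets \<mu> = sets borel" using haar_measure_sets[OF haar] .
  obtain B :: "'g set set" where B: "countable B" "topological_basis B"
    using ex_countable_basis by blast
  define A where "A = {b\<in>B. \<exists>K. compact K \<and> b \<subseteq> K}"
  show "\<exists>A. countable A \<and> A \<subseteq> sets \<mu> \<and> \<Union> A = space \<mu> \<and> (\<forall>a\<in>A. emeasure \<mu> a \<noteq> \<infinity>)"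
  proof (intro exI[of _ A] conjI)
    show "countable A" using B(1) unfolding A_def by (rule countable_subset[rotated]) auto
    show "A \<subseteq> sets \<mu>" using B(2) unfolding A_def sets by (auto simp: topological_basis_open)
    have "x \<in> \<Union>A" for x
    proof -
      obtain U K where "open U" "compact K" "x \<in> U" "U \<subseteq> K"
        using lc unfolding locally_compact_space_def by simp blast
      moreover obtain V where "V \<in> B" "x \<in> V" "V \<subseteq> U"
        using topological_basisE[OF B(2) \<open>open U\<close> \<open>x \<in> U\<close>] by blast
      ultimately show ?thesis unfolding A_def by blast
    qed
    then show "\<Union> A = space \<mu>" using sets_eq_imp_space_eq[OF sets] by auto
    show "\<forall>a\<in>A. emeasure \<mu> a \<noteq> \<infinity>"
    proof
      fix a assume "a \<in> A"
      then obtain K where K: "compact K" "a \<subseteq> K" and "a \<in> B" unfolding A_def by auto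
      then have "emeasure \<mu> a \<le> emeasure \<mu> K" using B(2)
        by (intro emeasure_mono) (auto simp: sets topological_basis_open compact_imp_closed)
      also have "\<dots> < \<infinity>" using haar_measure_compact_finite[OF haar K(1)] .
      finally show "emeasure \<mu> a \<noteq> \<infinity>" by simp
    qed
  qed
qed

lemma tendsto_set_integral_bounded:
  fixes F :: "nat \<Rightarrow> 'a \<Rightarrow> 'b::{banach, second_countable_topology}"
  assumes A: "A \<in> sets M" "emeasure M A < \<infinity>"
    and F: "\<And>m. F m \<in> borel_measurable M" and L: "L \<in> borel_measurable M"
    and bound: "\<And>m x. x \<in> A \<Longrightarrow> norm (F m x) \<le> C"
    and lim: "\<And>x. x \<in> A \<Longrightarrow> (\<lambda>m. F m x) \<longlonglongrightarrow> L x"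
  shows "(\<lambda>m. LINT x:A|M. F m x) \<longlonglongrightarrow> (LINT x:A|M. L x)"
  unfolding set_lebesgue_integral_def
proof (rule integral_dominated_convergence[where w="\<lambda>x. indicator A x * C"])
  show "(\<lambda>x. indicator A x *\<^sub>R L x) \<in> borel_measurable M"
    using L A by measurable
  show "(\<lambda>x. indicator A x *\<^sub>R F m x) \<in> borel_measurable M" for m
    using F A by measurable
  show "integrable M (\<lambda>x. indicator A x * C)"
    using A by (intro integrable_mult_left integrable_real_indicator) auto
  show "AE x in M. (\<lambda>m. indicator A x *\<^sub>R F m x) \<longlonglongrightarrow> indicator A x *\<^sub>R L x"
    using lim by (intro AE_I2) (auto split: split_indicator)
  show "AE x in M. norm (indicator A x *\<^sub>R F m x) \<le> indicator A x * C" for m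
    using bound by (intro AE_I2) (auto split: split_indicator)
qed

lemma (in sigma_finite_measure) borel_measurable_set_integral_param [measurable (raw)]:
  fixes f :: "'c \<Rightarrow> 'a \<Rightarrow> 'b::{banach, second_countable_topology}"
  assumes "(\<lambda>(x, y). f x y) \<in> borel_measurable (N \<Otimes>\<^sub>M M)" "A \<in> sets M"
  shows "(\<lambda>x. LINT y:A|M. f x y) \<in> borel_measurable N"
  unfolding set_lebesgue_integral_def using assms by measurable

lemma (in sigma_finite_measure) set_integrable_iterated_bounded:
  fixes H :: "'a \<Rightarrow> 'a \<Rightarrow> 'b::{banach, second_countable_topology}"
  assumes H [measurable]: "(\<lambda>(x, y). H x y) \<in> borel_measurable (M \<Otimes>\<^sub>M M)"
    and A [measurable]: "A \<in> sets M" and A_finite: "emeasure M A < \<infinity>"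
    and bound: "\<And>x y. norm (H x y) \<le> C"
  shows "y \<in> space M \<Longrightarrow> set_integrable M A (\<lambda>x. H x y)"
    and "set_integrable M A (\<lambda>y. LINT x:A|M. H x y)"
proof -
  show "set_integrable M A (\<lambda>x. H x y)" if "y \<in> space M"
  proof (rule set_integrable_bounded)
    show "(\<lambda>x. H x y) \<in> borel_measurable M" using that by measurable
  qed (use A_finite bound in auto)
  have "norm (LINT x:A|M. H x y) \<le> C * measure M A" if "y \<in> space M" for y
  proof (rule norm_set_integral_le)
    show "(\<lambda>x. H x y) \<in> borel_measurable M" using that by measurable
  qed (use A_finite bound in auto)
  then show "set_integrable M A (\<lambda>y. LINT x:A|M. H x y)"
  proof (rule set_integrable_bounded[rotated 3])
    show "(\<lambda>y. LINT x:A|M. H x y) \<in> borel_measurable M" by measurable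
  qed (use A_finite sets.sets_into_space[OF A] in auto)
qed

locale folner_haar_group =
  fixes \<mu> :: "'g::{topological_ab_group_add, t2_space, second_countable_topology} measure"
    and \<Lambda> :: "nat \<Rightarrow> 'g set"
  assumes locally_compact: "locally_compact_space (euclidean :: 'g topology)"
    and haar: "haar_measure \<mu>"
    and folner: "folner_seq \<mu> \<Lambda>"
begin

lemma sets_eq [measurable_cong]: "sets \<mu> = sets borel"
  using haar_measure_sets[OF haar] .

lemma space_eq [simp]: "space \<mu> = UNIV"
  using sets_eq_imp_space_eq[OF sets_eq] by simp

sublocale sigma_finite_measure \<mu>
  using haar_measure_sigma_finite[OF locally_compact haar] .

lemma folner_sets [measurable]: "\<Lambda> m \<in> sets borel"
  using folner by (simp add: folner_seq_def compact_imp_closed)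

lemma folner_sets_measure: "\<Lambda> m \<in> sets \<mu>"
  by (simp add: sets_eq)

lemma emeasure_folner_finite: "emeasure \<mu> (\<Lambda> m) < \<infinity>"
  using folner haar_measure_compact_finite[OF haar] by (simp add: folner_seq_def)

lemma measure_folner_pos: "0 < measure \<mu> (\<Lambda> m)"
proof -
  have "0 < emeasure \<mu> (\<Lambda> m)" using folner by (simp add: folner_seq_def)
  then show ?thesis
    using emeasure_folner_finite[of m] emeasure_eq_ennreal_measure[of \<mu> "\<Lambda> m"]
    by (auto simp: top.not_eq_extremum)
qed

lemma folner_average_translate:
  fixes F :: "'g \<Rightarrow> complex"
  assumes F: "F \<in> borel_measurable borel" and bound: "\<And>x. norm (F x) \<le> C"
    and lim: "(\<lambda>m. (LINT g:\<Lambda> m|\<mu>. F g) / of_real (measure \<mu> (\<Lambda> m))) \<longlonglongrightarrow> c"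
  shows "(\<lambda>m. (LINT g:\<Lambda> m|\<mu>. F (g + h)) / of_real (measure \<mu> (\<Lambda> m))) \<longlonglongrightarrow> c"
proof -
  define S where "S m = (\<lambda>x. x + h) ` \<Lambda> m" for m
  define D where "D m = (\<Lambda> m - S m) \<union> (S m - \<Lambda> m)" for m
  define E where "E m = (LINT g:\<Lambda> m|\<mu>. F (g + h)) - (LINT g:\<Lambda> m|\<mu>. F g)" for m
  have S_compact: "compact (S m)" for m
    unfolding S_def using folner
    by (intro compact_continuous_image continuous_intros) (simp add: folner_seq_def)
  have F_\<mu>: "F \<in> borel_measurable \<mu>"
    using F by (simp add: measurable_cong_sets[OF sets_eq refl])
  have E_bound: "norm (E m) \<le> C * measure \<mu> (D m)" for m
  proof -
    have "S m \<in> sets \<mu>" "emeasure \<mu> (S m) < \<infinity>"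
      using S_compact[of m] haar_measure_compact_finite[OF haar] by (auto simp: sets_eq compact_imp_closed)
    then show ?thesis
      unfolding E_def haar_set_integral_translate[OF haar F folner_sets] S_def[symmetric] D_def
      using norm_set_integral_diff_le[OF F_\<mu> _ _ _ emeasure_folner_finite bound] by (simp add: sets_eq)
  qed
  have ratio: "(\<lambda>m. measure \<mu> (D m) / measure \<mu> (\<Lambda> m)) \<longlonglongrightarrow> 0"
    using folner unfolding folner_seq_def D_def S_def by simp
  have "(\<lambda>m. E m / of_real (measure \<mu> (\<Lambda> m))) \<longlonglongrightarrow> 0"
  proof (rule Lim_null_comparison)
    show "\<forall>\<^sub>F m in sequentially. norm (E m / of_real (measure \<mu> (\<Lambda> m)))
        \<le> C * (measure \<mu> (D m) / measure \<mu> (\<Lambda> m))"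
      using E_bound measure_folner_pos
      by (intro always_eventually allI) (simp add: norm_divide divide_right_mono)
    show "(\<lambda>m. C * (measure \<mu> (D m) / measure \<mu> (\<Lambda> m))) \<longlonglongrightarrow> 0"
      using tendsto_mult_right_zero[OF ratio] .
  qed
  from tendsto_add[OF this lim] show ?thesis
    using measure_folner_pos by (simp add: E_def diff_divide_distrib)
qed

lemma norm_folner_average_le:
  fixes F :: "'g \<Rightarrow> complex"
  assumes "F \<in> borel_measurable \<mu>" "\<And>x. norm (F x) \<le> C"
  shows "norm ((LINT g:\<Lambda> m|\<mu>. F g) / of_real (measure \<mu> (\<Lambda> m))) \<le> C"
proof -
  have "norm (LINT g:\<Lambda> m|\<mu>. F g) \<le> C * measure \<mu> (\<Lambda> m)"
    using assms by (intro norm_set_integral_le emeasure_folner_finite) (auto simp: sets_eq)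
  then show ?thesis
    using measure_folner_pos[of m] by (simp add: norm_divide divide_le_eq)
qed

lemma folner_average_shift:
  fixes G :: "'g \<Rightarrow> 'g \<Rightarrow> complex"
  assumes G: "(\<lambda>(a, b). G a b) \<in> borel_measurable borel" and bound: "\<And>a b. norm (G a b) \<le> C"
    and lim: "(\<lambda>m. (LINT g:\<Lambda> m|\<mu>. G g (g + (- h1 + h2))) / of_real (measure \<mu> (\<Lambda> m))) \<longlonglongrightarrow> c"
  shows "(\<lambda>m. (LINT g:\<Lambda> m|\<mu>. G (g + h1) (g + h2)) / of_real (measure \<mu> (\<Lambda> m))) \<longlonglongrightarrow> c"
proof -
  have [measurable]: "(\<lambda>(a, b). G a b) \<in> borel_measurable (borel \<Otimes>\<^sub>M borel)"
    using G by (simp add: borel_prod)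
  have "(\<lambda>m. (LINT g:\<Lambda> m|\<mu>. G (g + h1) (g + h1 + (- h1 + h2))) / of_real (measure \<mu> (\<Lambda> m)))
      \<longlonglongrightarrow> c"
    using bound lim by (intro folner_average_translate[where F="\<lambda>y. G y (y + (- h1 + h2))"]) auto
  then show ?thesis by (simp add: algebra_simps)
qed

lemma folner_average_limit_measurable_bounded:
  fixes G :: "'g \<Rightarrow> 'g \<Rightarrow> complex"
  assumes G: "(\<lambda>(a, b). G a b) \<in> borel_measurable borel" and bound: "\<And>a b. norm (G a b) \<le> C"
    and lim: "\<And>h. (\<lambda>m. (LINT g:\<Lambda> m|\<mu>. G g (g + h)) / of_real (measure \<mu> (\<Lambda> m))) \<longlonglongrightarrow> \<gamma> h"
  shows "\<gamma> \<in> borel_measurable borel" and "norm (\<gamma> h) \<le> C"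
proof -
  have [measurable]: "(\<lambda>(a, b). G a b) \<in> borel_measurable (borel \<Otimes>\<^sub>M borel)"
    using G by (simp add: borel_prod)
  have "(\<lambda>h. (LINT g:\<Lambda> m|\<mu>. G g (g + h)) / of_real (measure \<mu> (\<Lambda> m))) \<in> borel_measurable \<mu>" for m
    by measurable
  then have "\<gamma> \<in> borel_measurable \<mu>"
    by (rule borel_measurable_LIMSEQ_metric) (rule lim)
  then show "\<gamma> \<in> borel_measurable borel"
    by (simp add: measurable_cong_sets[OF sets_eq refl])
  have "norm ((LINT g:\<Lambda> m|\<mu>. G g (g + h)) / of_real (measure \<mu> (\<Lambda> m))) \<le> C" for m
    using bound by (intro norm_folner_average_le) measurable
  then show "norm (\<gamma> h) \<le> C"
    using LIMSEQ_le_const2[OF tendsto_norm[OF lim[of h]]] by blast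
qed

lemma folner_iterated_average_tendsto:
  fixes G :: "'g \<Rightarrow> 'g \<Rightarrow> complex"
  assumes G: "(\<lambda>(a, b). G a b) \<in> borel_measurable borel" and bound: "\<And>a b. norm (G a b) \<le> C"
    and lim: "\<And>h. (\<lambda>m. (LINT g:\<Lambda> m|\<mu>. G g (g + h)) / of_real (measure \<mu> (\<Lambda> m))) \<longlonglongrightarrow> \<gamma> h"
  shows "(\<lambda>m. (LINT h2:\<Lambda> n|\<mu>. LINT h1:\<Lambda> n|\<mu>. LINT g:\<Lambda> m|\<mu>. G (g + h1) (g + h2))
            / of_real (measure \<mu> (\<Lambda> m)))
         \<longlonglongrightarrow> (LINT h2:\<Lambda> n|\<mu>. LINT h1:\<Lambda> n|\<mu>. \<gamma> (- h1 + h2))"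
proof -
  have [measurable]: "(\<lambda>(a, b). G a b) \<in> borel_measurable (borel \<Otimes>\<^sub>M borel)"
    using G by (simp add: borel_prod)
  note \<gamma>_measurable [measurable] = folner_average_limit_measurable_bounded(1)[OF G bound lim]
  define A where "A m h1 h2 = (LINT g:\<Lambda> m|\<mu>. G (g + h1) (g + h2)) / of_real (measure \<mu> (\<Lambda> m))"
    for m h1 h2
  have A_joint [measurable]: "(\<lambda>(h2, h1). A m h1 h2) \<in> borel_measurable (\<mu> \<Otimes>\<^sub>M \<mu>)" for m
    unfolding A_def by measurable
  have A_measurable: "(\<lambda>h1. A m h1 h2) \<in> borel_measurable \<mu>" for m h2
    by measurable
  have A_integral_measurable: "(\<lambda>h2. LINT h1:\<Lambda> n|\<mu>. A m h1 h2) \<in> borel_measurable \<mu>" for m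
    using A_joint folner_sets_measure by (rule borel_measurable_set_integral_param)
  have \<gamma>_shift_measurable: "(\<lambda>h1. \<gamma> (- h1 + h2)) \<in> borel_measurable \<mu>" for h2
    by measurable
  have \<gamma>_joint: "(\<lambda>(h2, h1). \<gamma> (- h1 + h2)) \<in> borel_measurable (\<mu> \<Otimes>\<^sub>M \<mu>)"
    by measurable
  have \<gamma>_integral_measurable: "(\<lambda>h2. LINT h1:\<Lambda> n|\<mu>. \<gamma> (- h1 + h2)) \<in> borel_measurable \<mu>"
    using \<gamma>_joint folner_sets_measure by (rule borel_measurable_set_integral_param)
  have A_bound: "norm (A m h1 h2) \<le> C" for m h1 h2
    unfolding A_def using bound by (intro norm_folner_average_le) measurable
  have pointwise: "(\<lambda>m. A m h1 h2) \<longlonglongrightarrow> \<gamma> (- h1 + h2)" for h1 h2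
    unfolding A_def using G bound lim by (rule folner_average_shift)
  have inner: "(\<lambda>m. LINT h1:\<Lambda> n|\<mu>. A m h1 h2) \<longlonglongrightarrow> (LINT h1:\<Lambda> n|\<mu>. \<gamma> (- h1 + h2))" for h2
    by (rule tendsto_set_integral_bounded[where F="\<lambda>m h1. A m h1 h2" and C=C])
       (rule folner_sets_measure emeasure_folner_finite A_measurable \<gamma>_shift_measurable
          A_bound pointwise)+
  have inner_bound: "norm (LINT h1:\<Lambda> n|\<mu>. A m h1 h2) \<le> C * measure \<mu> (\<Lambda> n)" for m h2
    by (rule norm_set_integral_le)
       (rule folner_sets_measure emeasure_folner_finite A_measurable A_bound)+
  have "(\<lambda>m. LINT h2:\<Lambda> n|\<mu>. LINT h1:\<Lambda> n|\<mu>. A m h1 h2)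
      \<longlonglongrightarrow> (LINT h2:\<Lambda> n|\<mu>. LINT h1:\<Lambda> n|\<mu>. \<gamma> (- h1 + h2))"
    by (rule tendsto_set_integral_bounded[where F="\<lambda>m h2. LINT h1:\<Lambda> n|\<mu>. A m h1 h2"])
       (rule folner_sets_measure emeasure_folner_finite A_integral_measurable
          \<gamma>_integral_measurable inner_bound inner)+
  then show ?thesis by (simp add: A_def)
qed

lemma set_integrable_translated_pair:
  fixes G :: "'g \<Rightarrow> 'g \<Rightarrow> complex"
  assumes G: "(\<lambda>(a, b). G a b) \<in> borel_measurable borel" and bound: "\<And>a b. norm (G a b) \<le> C"
    and A: "A \<in> sets \<mu>" "emeasure \<mu> A < \<infinity>"
  shows "set_integrable \<mu> A (\<lambda>g. G (g + h1) (g + h2))"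
proof -
  have [measurable]: "(\<lambda>(a, b). G a b) \<in> borel_measurable (borel \<Otimes>\<^sub>M borel)"
    using G by (simp add: borel_prod)
  show ?thesis
    by (rule set_integrable_bounded[OF _ A bound]) measurable
qed

lemma set_integrable_iterated_correlation:
  fixes G :: "'g \<Rightarrow> 'g \<Rightarrow> complex"
  assumes G: "(\<lambda>(a, b). G a b) \<in> borel_measurable borel" and bound: "\<And>a b. norm (G a b) \<le> C"
  shows "set_integrable \<mu> (\<Lambda> n) (\<lambda>h1. LINT g:\<Lambda> m|\<mu>. G (g + h1) (g + h2))"
    and "set_integrable \<mu> (\<Lambda> n) (\<lambda>h2. LINT h1:\<Lambda> n|\<mu>. LINT g:\<Lambda> m|\<mu>. G (g + h1) (g + h2))"
proof -
  have [measurable]: "(\<lambda>(a, b). G a b) \<in> borel_measurable (borel \<Otimes>\<^sub>M borel)"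
    using G by (simp add: borel_prod)
  have joint: "(\<lambda>(h1, h2). LINT g:\<Lambda> m|\<mu>. G (g + h1) (g + h2)) \<in> borel_measurable (\<mu> \<Otimes>\<^sub>M \<mu>)"
    by measurable
  have integral_bound: "norm (LINT g:\<Lambda> m|\<mu>. G (g + h1) (g + h2)) \<le> C * measure \<mu> (\<Lambda> m)"
    for h1 h2
    by (rule norm_set_integral_le[OF _ folner_sets_measure emeasure_folner_finite bound]) measurable
  show "set_integrable \<mu> (\<Lambda> n) (\<lambda>h1. LINT g:\<Lambda> m|\<mu>. G (g + h1) (g + h2))"
    and "set_integrable \<mu> (\<Lambda> n) (\<lambda>h2. LINT h1:\<Lambda> n|\<mu>. LINT g:\<Lambda> m|\<mu>. G (g + h1) (g + h2))"
    using set_integrable_iterated_bounded[OF joint folner_sets_measure emeasure_folner_finite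
        integral_bound]
    by simp_all
qed

lemma set_integrable_iterated_limit:
  fixes G :: "'g \<Rightarrow> 'g \<Rightarrow> complex"
  assumes G: "(\<lambda>(a, b). G a b) \<in> borel_measurable borel" and bound: "\<And>a b. norm (G a b) \<le> C"
    and lim: "\<And>h. (\<lambda>m. (LINT g:\<Lambda> m|\<mu>. G g (g + h)) / of_real (measure \<mu> (\<Lambda> m))) \<longlonglongrightarrow> \<gamma> h"
  shows "set_integrable \<mu> (\<Lambda> n) (\<lambda>h1. \<gamma> (- h1 + h2))"
    and "set_integrable \<mu> (\<Lambda> n) (\<lambda>h2. LINT h1:\<Lambda> n|\<mu>. \<gamma> (- h1 + h2))"
proof -
  note [measurable] = folner_average_limit_measurable_bounded(1)[OF G bound lim]
  have joint: "(\<lambda>(h1, h2). \<gamma> (- h1 + h2)) \<in> borel_measurable (\<mu> \<Otimes>\<^sub>M \<mu>)"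
    by measurable
  show "set_integrable \<mu> (\<Lambda> n) (\<lambda>h1. \<gamma> (- h1 + h2))"
    and "set_integrable \<mu> (\<Lambda> n) (\<lambda>h2. LINT h1:\<Lambda> n|\<mu>. \<gamma> (- h1 + h2))"
    using set_integrable_iterated_bounded[OF joint folner_sets_measure emeasure_folner_finite
        folner_average_limit_measurable_bounded(2)[OF G bound lim]]
    by simp_all
qed

end

theorem proposition2p5:
  fixes \<mu> :: "'g::{topological_ab_group_add, t2_space, second_countable_topology} measure"
    and \<Lambda> :: "nat \<Rightarrow> 'g set"
    and f :: "'g \<Rightarrow> 'h::{complex_inner, complete_space}"
    and \<gamma> :: "'g \<Rightarrow> complex"
  assumes lc: "locally_compact_space (euclidean :: 'g topology)"
    and haar: "haar_measure \<mu>"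
    and folner: "folner_seq \<mu> \<Lambda>"
    and bounded: "\<exists>B. \<forall>g. norm (f g) \<le> B"
    and meas: "\<And>x. (\<lambda>g. cinner (f g) x) \<in> borel_measurable borel"
    and meas2: "(\<lambda>(g, h). cinner (f g) (f h)) \<in> borel_measurable (borel :: ('g \<times> 'g) measure)"
  shows "(\<forall>A h. A \<in> sets \<mu> \<and> emeasure \<mu> A < \<infinity> \<longrightarrow>
            set_integrable \<mu> A (\<lambda>g. cinner (f g) (f (g + h))))
       \<and> ((\<forall>h. (\<lambda>n. (LINT g:\<Lambda> n|\<mu>. cinner (f g) (f (g + h))) / complex_of_real (measure \<mu> (\<Lambda> n)))
                 \<longlonglongrightarrow> \<gamma> h)
          \<longrightarrow> (\<forall>n.
               (\<forall>m h1 h2. set_integrable \<mu> (\<Lambda> m) (\<lambda>g. cinner (f (g + h1)) (f (g + h2)))) \<and>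
               (\<forall>m h2. set_integrable \<mu> (\<Lambda> n)
                   (\<lambda>h1. LINT g:\<Lambda> m|\<mu>. cinner (f (g + h1)) (f (g + h2)))) \<and>
               (\<forall>m. set_integrable \<mu> (\<Lambda> n)
                   (\<lambda>h2. LINT h1:\<Lambda> n|\<mu>. LINT g:\<Lambda> m|\<mu>. cinner (f (g + h1)) (f (g + h2)))) \<and>
               (\<forall>h2. set_integrable \<mu> (\<Lambda> n) (\<lambda>h1. \<gamma> (- h1 + h2))) \<and>
               set_integrable \<mu> (\<Lambda> n) (\<lambda>h2. LINT h1:\<Lambda> n|\<mu>. \<gamma> (- h1 + h2)) \<and>
               (\<lambda>m. (LINT h2:\<Lambda> n|\<mu>. LINT h1:\<Lambda> n|\<mu>. LINT g:\<Lambda> m|\<mu>.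
                        cinner (f (g + h1)) (f (g + h2))) / complex_of_real (measure \<mu> (\<Lambda> m)))
                 \<longlonglongrightarrow> (LINT h2:\<Lambda> n|\<mu>. LINT h1:\<Lambda> n|\<mu>. \<gamma> (- h1 + h2))))"
proof -
  interpret folner_haar_group \<mu> \<Lambda> using lc haar folner by unfold_locales
  obtain B where B: "\<And>g. norm (f g) \<le> B" using bounded by blast
  have "0 \<le> B" using order_trans[OF norm_ge_zero B] .
  then have bound: "norm (cinner (f a) (f b)) \<le> B * B" for a b
    using order_trans[OF norm_cinner_le mult_mono[OF B B]] by simp
  note translated = set_integrable_translated_pair[OF meas2 bound]
  show ?thesis
  proof (intro conjI allI impI)
    show "set_integrable \<mu> A (\<lambda>g. cinner (f g) (f (g + h)))"
      if "A \<in> sets \<mu> \<and> emeasure \<mu> A < \<infinity>" for A h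
      using translated[of A 0 h] that by simp
    fix n
    assume lim: "\<forall>h. (\<lambda>n. (LINT g:\<Lambda> n|\<mu>. cinner (f g) (f (g + h)))
      / complex_of_real (measure \<mu> (\<Lambda> n))) \<longlonglongrightarrow> \<gamma> h"
    show "set_integrable \<mu> (\<Lambda> m) (\<lambda>g. cinner (f (g + h1)) (f (g + h2)))" for m h1 h2
      by (rule translated[OF folner_sets_measure emeasure_folner_finite])
    show "set_integrable \<mu> (\<Lambda> n) (\<lambda>h1. LINT g:\<Lambda> m|\<mu>. cinner (f (g + h1)) (f (g + h2)))"
      "set_integrable \<mu> (\<Lambda> n)
         (\<lambda>h2. LINT h1:\<Lambda> n|\<mu>. LINT g:\<Lambda> m|\<mu>. cinner (f (g + h1)) (f (g + h2)))" for m h2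
      by (rule set_integrable_iterated_correlation[OF meas2 bound])+
    show "set_integrable \<mu> (\<Lambda> n) (\<lambda>h1. \<gamma> (- h1 + h2))" for h2
      using set_integrable_iterated_limit(1)[OF meas2 bound] lim by blast
    show "set_integrable \<mu> (\<Lambda> n) (\<lambda>h2. LINT h1:\<Lambda> n|\<mu>. \<gamma> (- h1 + h2))"
      using set_integrable_iterated_limit(2)[OF meas2 bound] lim by blast
    show "(\<lambda>m. (LINT h2:\<Lambda> n|\<mu>. LINT h1:\<Lambda> n|\<mu>. LINT g:\<Lambda> m|\<mu>. cinner (f (g + h1)) (f (g + h2)))
         / complex_of_real (measure \<mu> (\<Lambda> m)))
       \<longlonglongrightarrow> (LINT h2:\<Lambda> n|\<mu>. LINT h1:\<Lambda> n|\<mu>. \<gamma> (- h1 + h2))"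
      using folner_iterated_average_tendsto[OF meas2 bound] lim by blast
  qed
qed

end
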